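(* Let $n=1$. For every $m\in\mathbb{N}_0$, the projection $E_m$ belongs to $\mathcal{W}^{2,1}(\mathcal{F}^2)$, and $$\Delta E_m=\pi\big(mE_{m-1}-(2m+1)E_m+(m+1)E_{m+1}\big),$$ where the term $mE_{m-1}$ is interpreted as $0$ when $m=0$.
   Context: $\mathcal{F}^2(\mathbb{C})$ is the Fock space of entire functions on $\mathbb{C}$ square integrable with respect to $e^{-\pi|z|^2}dz$, with normalized kernels $k_z(w)=e^{\pi\bar zw-\pi|z|^2/2}$ and orthonormal basis $e_m(z)=\sqrt{\pi^m/m!}\,z^m$. $E_m$ is the orthogonal projection onto $\mathrm{span}\,e_m$. $B(S)(z)=\langle Sk_z,k_z\rangle$ and $\Delta=\partial_z\partial_{\bar z}$. $\mathcal{W}^{2,1}(\mathcal{F}^2)$ is the set of bounded $S$ with $\Delta B(S)=B(T)$ for some trace-class $T$, and then $\Delta S:=T$. *)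

theory Defs
  imports "HOL-Analysis.Analysis"
begin

definition fock_space :: "(complex \<Rightarrow> complex) set" where
  "fock_space = {f. f holomorphic_on UNIV \<and>
     integrable lborel (\<lambda>w. (cmod (f w))\<^sup>2 * exp (- pi * (cmod w)\<^sup>2))}"

definition fock_inner :: "(complex \<Rightarrow> complex) \<Rightarrow> (complex \<Rightarrow> complex) \<Rightarrow> complex" where
  "fock_inner f g = (LINT w|lborel. f w * cnj (g w) * complex_of_real (exp (- pi * (cmod w)\<^sup>2)))"

definition fock_norm :: "(complex \<Rightarrow> complex) \<Rightarrow> real" where
  "fock_norm f = sqrt (Re (fock_inner f f))"

definition fock_kernel :: "complex \<Rightarrow> complex \<Rightarrow> complex" where
  "fock_kernel z = (\<lambda>w. exp (complex_of_real pi * cnj z * w - complex_of_real (pi * (cmod z)\<^sup>2 / 2)))"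

definition fock_basis :: "nat \<Rightarrow> complex \<Rightarrow> complex" where
  "fock_basis m = (\<lambda>w. complex_of_real (sqrt (pi ^ m / fact m)) * w ^ m)"

definition fock_proj :: "nat \<Rightarrow> (complex \<Rightarrow> complex) \<Rightarrow> (complex \<Rightarrow> complex)" where
  "fock_proj m f = (\<lambda>w. fock_inner f (fock_basis m) * fock_basis m w)"

text \<open>Bounded (linear) operators on F^2; operators are maps on functions,
  only their action on F^2 matters.\<close>

definition fock_bounded :: "((complex \<Rightarrow> complex) \<Rightarrow> (complex \<Rightarrow> complex)) \<Rightarrow> bool" where
  "fock_bounded S \<longleftrightarrow>
     (\<forall>f\<in>fock_space. S f \<in> fock_space) \<and>
     (\<forall>f\<in>fock_space. \<forall>g\<in>fock_space. \<forall>a b.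
        S (\<lambda>w. a * f w + b * g w) = (\<lambda>w. a * S f w + b * S g w)) \<and>
     (\<exists>C. \<forall>f\<in>fock_space. fock_norm (S f) \<le> C * fock_norm f)"

text \<open>Trace class = nuclear operators: T h = sum_k <h, g_k> f_k with
  sum_k ||f_k|| ||g_k|| < infinity.\<close>

definition fock_trace_class :: "((complex \<Rightarrow> complex) \<Rightarrow> (complex \<Rightarrow> complex)) \<Rightarrow> bool" where
  "fock_trace_class T \<longleftrightarrow> fock_bounded T \<and>
     (\<exists>f g :: nat \<Rightarrow> complex \<Rightarrow> complex.
        (\<forall>k. f k \<in> fock_space \<and> g k \<in> fock_space) \<and>
        summable (\<lambda>k. fock_norm (f k) * fock_norm (g k)) \<and>
        (\<forall>h\<in>fock_space. \<forall>w. T h w = (\<Sum>k. fock_inner h (g k) * f k w)))"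

definition berezin :: "((complex \<Rightarrow> complex) \<Rightarrow> (complex \<Rightarrow> complex)) \<Rightarrow> complex \<Rightarrow> complex" where
  "berezin S z = fock_inner (S (fock_kernel z)) (fock_kernel z)"

text \<open>Classical Laplacian Delta = d_z d_zbar = (1/4)(d_x^2 + d_y^2):
  F has (pointwise existing second partial derivatives and) Laplacian G.\<close>

definition has_laplacian :: "(complex \<Rightarrow> complex) \<Rightarrow> (complex \<Rightarrow> complex) \<Rightarrow> bool" where
  "has_laplacian F G \<longleftrightarrow>
     (\<exists>Fx Fy Fxx Fyy :: complex \<Rightarrow> complex. \<forall>z.
        ((\<lambda>t::real. F (z + complex_of_real t)) has_vector_derivative Fx z) (at 0) \<and>
        ((\<lambda>t::real. F (z + \<i> * complex_of_real t)) has_vector_derivative Fy z) (at 0) \<and>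
        ((\<lambda>t::real. Fx (z + complex_of_real t)) has_vector_derivative Fxx z) (at 0) \<and>
        ((\<lambda>t::real. Fy (z + \<i> * complex_of_real t)) has_vector_derivative Fyy z) (at 0) \<and>
        G z = (Fxx z + Fyy z) / 4)"

definition W21 :: "((complex \<Rightarrow> complex) \<Rightarrow> (complex \<Rightarrow> complex)) \<Rightarrow> bool" where
  "W21 S \<longleftrightarrow> fock_bounded S \<and>
     (\<exists>T. fock_trace_class T \<and> has_laplacian (berezin S) (berezin T))"

end

theory Submission
  imports Defs "HOL-Complex_Analysis.Complex_Analysis" "HOL-Probability.Probability"
begin

text \<open>Both Berezin transforms involved are radial: \<open>B(E\<^sub>m)(z) = G\<^sub>m(|z|\<^sup>2)\<close> with
  \<open>G\<^sub>m(s) = pi\<^sup>m / m! s\<^sup>m exp (- pi s)\<close>, and the Laplacian of \<open>G(|z|\<^sup>2)\<close> is \<open>s G''(s) + G'(s)\<close>,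
  which a direct computation writes as \<open>pi (m G\<^sub>m\<^sub>-\<^sub>1 - (2m+1) G\<^sub>m + (m+1) G\<^sub>m\<^sub>+\<^sub>1)\<close>: the Berezin
  transform of the claimed finite-rank operator.

  That \<open>\<Delta>E\<^sub>m\<close> is unique is injectivity of the Berezin transform on trace-class operators.
  A nuclear operator \<open>h \<mapsto> \<Sum>\<^sub>k \<langle>h, g\<^sub>k\<rangle> f\<^sub>k\<close> has the integral kernel
  \<open>K(w, u) = \<Sum>\<^sub>k f\<^sub>k(w) cnj (g\<^sub>k(u))\<close>, holomorphic in \<open>w\<close> and antiholomorphic in \<open>u\<close>, and its Berezin
  transform is \<open>exp (- pi |z|\<^sup>2) K(z, z)\<close>; a function holomorphic in \<open>(w, v)\<close> that vanishes on
  \<open>v = cnj w\<close> vanishes identically.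

  Everything rests on the reproducing property of the kernels \<open>k\<^sub>z\<close>, i.e. on the Gaussian mean value
  property of entire functions, which follows by averaging over rotations; these preserve Lebesgue
  measure since they are products of shears.\<close>

section \<open>Lebesgue measure on the complex plane\<close>

lemma borel_measurable_Complex_pair [measurable]:
  "(\<lambda>p. Complex (fst p) (snd p)) \<in> borel_measurable (borel :: (real \<times> real) measure)"
  by (intro borel_measurable_continuous_onI continuous_intros)

lemma lborel_complex_eq_distr_pair:
  "lborel = distr (lborel \<Otimes>\<^sub>M lborel) borel (\<lambda>p. Complex (fst p) (snd p))"
proof (rule lborel_eqI)
  fix l u :: complex assume lu: "\<And>b. b \<in> Basis \<Longrightarrow> l \<bullet> b \<le> u \<bullet> b"
  have "Re l \<le> Re u" "Im l \<le> Im u" using lu[of 1] lu[of \<i>] by auto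
  moreover have "(\<lambda>p. Complex (fst p) (snd p)) -` box l u \<inter> space (lborel \<Otimes>\<^sub>M lborel) =
      box (Re l) (Re u) \<times> box (Im l) (Im u)"
    by (auto simp: box_def Basis_complex_def space_pair_measure)
  moreover have "(\<lambda>p. Complex (fst p) (snd p)) \<in> measurable (lborel \<Otimes>\<^sub>M lborel) borel"
    by (simp add: measurable_lborel1 lborel_prod)
  ultimately show "emeasure (distr (lborel \<Otimes>\<^sub>M lborel) borel (\<lambda>p. Complex (fst p) (snd p))) (box l u)
      = (\<Prod>b\<in>Basis. (u - l) \<bullet> b)"
    by (simp add: emeasure_distr lborel.emeasure_pair_measure_Times Basis_complex_def ennreal_mult)
qed simp

lemma distr_lborel_pair_shear:
  fixes t :: real
  shows "distr (lborel \<Otimes>\<^sub>M lborel) (lborel \<Otimes>\<^sub>M lborel) (\<lambda>p. (fst p, snd p + t * fst p))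
      = (lborel \<Otimes>\<^sub>M lborel :: (real \<times> real) measure)"
    (is "distr ?P ?P ?S = ?P")
proof (rule measure_eqI)
  fix A assume "A \<in> sets (distr ?P ?P ?S)"
  then have A: "A \<in> sets ?P" by simp
  have S: "?S \<in> measurable ?P ?P" by measurable
  have "emeasure (distr ?P ?P ?S) A = emeasure ?P (?S -` A \<inter> space ?P)"
    using S A by (rule emeasure_distr)
  also have "\<dots> = (\<integral>\<^sup>+x. emeasure lborel (Pair x -` (?S -` A \<inter> space ?P)) \<partial>lborel)"
    using measurable_sets[OF S A] by (rule lborel.emeasure_pair_measure_alt)
  also have "\<dots> = (\<integral>\<^sup>+x. emeasure lborel (Pair x -` A) \<partial>lborel)"
  proof (rule nn_integral_cong)
    fix x :: real
    have "Pair x -` (?S -` A \<inter> space ?P) = (+) (t * x) -` (Pair x -` A)"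
      by (auto simp: space_pair_measure add.commute)
    also have "emeasure lborel \<dots> = emeasure (distr lborel borel ((+) (t * x))) (Pair x -` A)"
      using sets_Pair1[OF A] by (simp add: emeasure_distr)
    finally show "emeasure lborel (Pair x -` (?S -` A \<inter> space ?P)) = emeasure lborel (Pair x -` A)"
      by (simp add: lborel_distr_plus)
  qed
  also have "\<dots> = emeasure ?P A"
    using A by (rule lborel.emeasure_pair_measure_alt[symmetric])
  finally show "emeasure (distr ?P ?P ?S) A = emeasure ?P A" .
qed simp

lemma distr_lborel_pair_shear':
  fixes t :: real
  shows "distr (lborel \<Otimes>\<^sub>M lborel) (lborel \<Otimes>\<^sub>M lborel) (\<lambda>p. (fst p + t * snd p, snd p))
      = (lborel \<Otimes>\<^sub>M lborel :: (real \<times> real) measure)"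
    (is "distr ?P ?P ?S' = ?P")
proof -
  let ?S = "\<lambda>p. (fst p, snd p + t * fst p)" and ?swap = "\<lambda>(x::real, y::real). (y, x)"
  have swap: "?swap \<in> measurable ?P ?P" by measurable
  have S: "?S \<in> measurable ?P ?P" by measurable
  have "?S' = ?swap \<circ> (?S \<circ> ?swap)" by (simp add: fun_eq_iff case_prod_beta)
  then have "distr ?P ?P ?S' = distr (distr (distr ?P ?P ?swap) ?P ?S) ?P ?swap"
    by (simp only: distr_distr[OF S swap] distr_distr[OF swap measurable_comp[OF swap S]])
  also have "\<dots> = ?P"
    by (simp only: distr_lborel_pair_shear lborel_pair.distr_pair_swap[symmetric])
  finally show ?thesis .
qed

text \<open>The rotation \<open>(a, b)\<close>, \<open>a \<noteq> -1\<close>, is the product of the horizontal shear by \<open>t\<close>, the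
  vertical shear by \<open>b\<close> and the horizontal shear by \<open>t\<close>; shears preserve Lebesgue measure by
  Fubini and translation invariance.\<close>

lemma rotation_eq_shears:
  fixes a b t x y :: real
  assumes "a\<^sup>2 + b\<^sup>2 = 1" and "a \<noteq> -1" and "t = - b / (1 + a)"
  shows "(x + t * y) + t * (y + b * (x + t * y)) = a * x - b * y"
    and "y + b * (x + t * y) = b * x + a * y"
proof -
  have a: "1 + a \<noteq> 0" using assms(2) by auto
  then have t: "t * (1 + a) = - b" using assms(3) by (simp add: field_simps)
  have "t * b * (1 + a) = (t * (1 + a)) * b" by (simp add: algebra_simps)
  also have "\<dots> = (a - 1) * (1 + a)" using t assms(1) by (simp add: power2_eq_square algebra_simps)
  finally have "t * b = a - 1" using a by simp
  with t show "(x + t * y) + t * (y + b * (x + t * y)) = a * x - b * y"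
    and "y + b * (x + t * y) = b * x + a * y"
    by algebra+
qed

lemma lborel_distr_mult_unimodular:
  fixes c :: complex
  assumes "cmod c = 1"
  shows "distr lborel borel ((*) c) = lborel"
proof (cases "c = -1")
  case True
  then have "(*) c = uminus" by (simp add: fun_eq_iff)
  then show ?thesis
    using lborel_affine[of "-1" "0::complex"] by (simp add: density_1)
next
  case False
  define a b where "a = Re c" and "b = Im c"
  define t where "t = - b / (1 + a)"
  have ab: "a\<^sup>2 + b\<^sup>2 = 1" using assms unfolding a_def b_def cmod_def by simp
  have a: "a \<noteq> -1"
    using False ab unfolding a_def b_def by (auto simp: complex_eq_iff)
  let ?P = "lborel \<Otimes>\<^sub>M lborel :: (real \<times> real) measure"
  let ?C = "\<lambda>p::real \<times> real. Complex (fst p) (snd p)"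
  let ?S = "\<lambda>p::real \<times> real. (fst p, snd p + b * fst p)"
  let ?S' = "\<lambda>p::real \<times> real. (fst p + t * snd p, snd p)"
  have C: "?C \<in> measurable ?P borel" by (simp add: measurable_lborel1 lborel_prod)
  have S: "?S \<in> measurable ?P ?P" by measurable
  have S': "?S' \<in> measurable ?P ?P" by measurable
  have mult: "(*) c \<in> measurable borel borel" by measurable
  have rot: "(*) c \<circ> ?C = ?C \<circ> ?S' \<circ> ?S \<circ> ?S'"
    using rotation_eq_shears[OF ab a t_def]
    by (auto simp: fun_eq_iff complex_eq_iff a_def b_def)
  have "distr lborel borel ((*) c) = distr ?P borel ((*) c \<circ> ?C)"
    by (simp only: lborel_complex_eq_distr_pair distr_distr[OF mult C])
  also have "\<dots> = distr (distr ?P ?P ?S') borel (?C \<circ> ?S' \<circ> ?S)"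
    unfolding rot by (rule distr_distr[symmetric]) (use C S S' in \<open>auto intro: measurable_comp\<close>)
  also have "\<dots> = distr (distr ?P ?P ?S) borel (?C \<circ> ?S')"
    unfolding distr_lborel_pair_shear'
    by (rule distr_distr[symmetric]) (use C S S' in \<open>auto intro: measurable_comp\<close>)
  also have "\<dots> = distr (distr ?P ?P ?S') borel ?C"
    unfolding distr_lborel_pair_shear by (rule distr_distr[symmetric, OF C S'])
  also have "\<dots> = lborel"
    by (simp only: distr_lborel_pair_shear' lborel_complex_eq_distr_pair[symmetric])
  finally show ?thesis .
qed

lemma
  fixes f :: "'a::euclidean_space \<Rightarrow> 'b::{banach, second_countable_topology}"
  assumes "distr lborel borel g = lborel" and "g \<in> borel_measurable borel"
    and "f \<in> borel_measurable borel"
  shows integrable_lborel_invariant: "integrable lborel (\<lambda>x. f (g x)) \<longleftrightarrow> integrable lborel f"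
    and integral_lborel_invariant: "(\<integral>x. f (g x) \<partial>lborel) = integral\<^sup>L lborel f"
  using integrable_distr_eq[of g lborel borel f] integral_distr[of g lborel borel f] assms
  by (simp_all add: measurable_lborel1)

lemma
  fixes f :: "'a::euclidean_space \<Rightarrow> 'b::{banach, second_countable_topology}"
  assumes "f \<in> borel_measurable borel"
  shows integrable_lborel_translate: "integrable lborel (\<lambda>x. f (c + x)) \<longleftrightarrow> integrable lborel f"
    and integral_lborel_translate: "(\<integral>x. f (c + x) \<partial>lborel) = integral\<^sup>L lborel f"
proof -
  have "distr lborel borel ((+) c) = lborel" and "(+) c \<in> borel_measurable borel"
    by (simp_all add: lborel_distr_plus)
  from integrable_lborel_invariant[OF this assms] integral_lborel_invariant[OF this assms]
  show "integrable lborel (\<lambda>x. f (c + x)) \<longleftrightarrow> integrable lborel f"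
    and "(\<integral>x. f (c + x) \<partial>lborel) = integral\<^sup>L lborel f" .
qed

section \<open>Gaussian integrals and the mean value property\<close>

lemma has_bochner_integral_gaussian:
  fixes a :: real
  assumes "a > 0"
  shows "has_bochner_integral lborel (\<lambda>x::real. exp (- a * x\<^sup>2)) (sqrt (pi / a))"
proof -
  define \<sigma> where "\<sigma> = 1 / sqrt (2 * a)"
  have "exp (- a * x\<^sup>2) = sqrt (pi / a) * normal_density 0 \<sigma> x" for x
    using assms by (simp add: normal_density_def \<sigma>_def power_divide real_sqrt_divide field_simps)
  moreover have "has_bochner_integral lborel (\<lambda>x. sqrt (pi / a) * normal_density 0 \<sigma> x) (sqrt (pi / a) * 1)"
    using assms by (intro has_bochner_integral_mult_right) (simp add: has_bochner_integral_iff \<sigma>_def)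
  ultimately show ?thesis by simp
qed

lemma has_bochner_integral_gaussian_complex:
  fixes a :: real
  assumes "a > 0"
  shows "has_bochner_integral lborel (\<lambda>w::complex. exp (- a * (cmod w)\<^sup>2)) (pi / a)"
proof (rule has_bochner_integral_nn_integral)
  have "ennreal (exp (- a * (cmod w)\<^sup>2)) = (\<Prod>b\<in>Basis. ennreal (exp (- a * (w \<bullet> b)\<^sup>2)))" for w
    by (simp add: Basis_complex_def cmod_power2 algebra_simps exp_add[symmetric] ennreal_mult[symmetric])
  then have "(\<integral>\<^sup>+w. ennreal (exp (- a * (cmod w)\<^sup>2)) \<partial>lborel)
      = (\<integral>\<^sup>+w. (\<Prod>b\<in>Basis. ennreal (exp (- a * ((w::complex) \<bullet> b)\<^sup>2))) \<partial>lborel)"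
    by simp
  also have "\<dots> = (\<Prod>b\<in>(Basis :: complex set). \<integral>\<^sup>+x. ennreal (exp (- a * x\<^sup>2)) \<partial>lborel)"
    by (rule nn_integral_lborel_prod) auto
  also have "\<dots> = ennreal (sqrt (pi / a)) ^ 2"
    using has_bochner_integral_gaussian[OF assms]
    by (subst nn_integral_eq_integral) (auto simp: has_bochner_integral_iff)
  also have "\<dots> = ennreal (pi / a)"
    using assms by (simp add: ennreal_power)
  finally show "(\<integral>\<^sup>+w. ennreal (exp (- a * (cmod w)\<^sup>2)) \<partial>lborel) = ennreal (pi / a)" .
qed (use assms in auto)

lemma integral_rotation_average:
  fixes F :: "complex \<Rightarrow> complex"
  assumes F: "integrable lborel F"
  shows "(\<integral>w. (LINT t:{0..2*pi}|lborel. F (cis t * w)) \<partial>lborel) = 2 * pi * integral\<^sup>L lborel F"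
proof -
  have Fm [measurable]: "F \<in> borel_measurable borel"
    using borel_measurable_integrable[OF F] by simp
  have rot: "(\<integral>w. G (cis t * w) \<partial>lborel) = integral\<^sup>L lborel G"
    if "G \<in> borel_measurable borel" for t and G :: "complex \<Rightarrow> 'a::{banach, second_countable_topology}"
    using that by (intro integral_lborel_invariant lborel_distr_mult_unimodular) auto
  have rot_int: "integrable lborel (\<lambda>w. F (cis t * w))" for t
    using F by (subst integrable_lborel_invariant) (auto intro: lborel_distr_mult_unimodular)
  define \<Phi> where "\<Phi> = (\<lambda>p::real \<times> complex. indicator {0..2*pi} (fst p) *\<^sub>R F (cis (fst p) * snd p))"
  have "(\<lambda>p::real \<times> complex. cis (fst p) * snd p) \<in> borel_measurable borel"
    by (intro borel_measurable_continuous_onI continuous_intros)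
  from measurable_comp[OF this Fm]
  have [measurable]: "(\<lambda>p. F (cis (fst p) * snd p)) \<in> borel_measurable (lborel \<Otimes>\<^sub>M lborel)"
    by (simp add: o_def measurable_lborel1 lborel_prod)
  have \<Phi>_meas: "\<Phi> \<in> borel_measurable (lborel \<Otimes>\<^sub>M lborel)"
    unfolding \<Phi>_def by measurable
  have \<Phi>_int: "integrable (lborel \<Otimes>\<^sub>M lborel) \<Phi>"
  proof (rule lborel_pair.Fubini_integrable[OF \<Phi>_meas])
    have "(\<integral>w. norm (\<Phi> (t, w)) \<partial>lborel) = indicator {0..2*pi} t * (\<integral>w. norm (F w) \<partial>lborel)" for t
      unfolding \<Phi>_def using rot[of "\<lambda>w. norm (F w)"] by (simp add: indicator_def)
    then show "integrable lborel (\<lambda>t. \<integral>w. norm (\<Phi> (t, w)) \<partial>lborel)"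
      by (simp add: integrable_indicator_iff emeasure_lborel_Icc)
    show "AE t in lborel. integrable lborel (\<lambda>w. \<Phi> (t, w))"
      unfolding \<Phi>_def by (auto intro!: integrable_scaleR_right rot_int)
  qed
  have "(\<integral>w. (LINT t:{0..2*pi}|lborel. F (cis t * w)) \<partial>lborel) = (\<integral>w. (\<integral>t. \<Phi> (t, w) \<partial>lborel) \<partial>lborel)"
    by (simp add: \<Phi>_def set_lebesgue_integral_def)
  also have "\<dots> = (\<integral>t. (\<integral>w. \<Phi> (t, w) \<partial>lborel) \<partial>lborel)"
    using lborel_pair.integral_snd[of "\<lambda>t w. \<Phi> (t, w)"] lborel_pair.integral_fst'[OF \<Phi>_int] \<Phi>_int
    by (simp add: case_prod_unfold)
  also have "\<dots> = (\<integral>t. indicator {0..2*pi} t *\<^sub>R integral\<^sup>L lborel F \<partial>lborel)"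
    by (simp add: \<Phi>_def rot)
  also have "\<dots> = 2 * pi * integral\<^sup>L lborel F"
    by (simp add: scaleR_conv_of_real)
  finally show ?thesis .
qed

lemma holomorphic_circle_mean:
  fixes h :: "complex \<Rightarrow> complex"
  assumes h: "h holomorphic_on UNIV"
  shows "set_integrable lborel {0..2*pi} (\<lambda>t. h (cis t * w))"
    and "(LINT t:{0..2*pi}|lborel. h (cis t * w)) = 2 * pi * h 0"
proof -
  have "continuous_on {0..2*pi} (\<lambda>t. h (cis t * w))"
    by (intro continuous_on_compose2[OF holomorphic_on_imp_continuous_on[OF h]] continuous_intros) auto
  then show int: "set_integrable lborel {0..2*pi} (\<lambda>t. h (cis t * w))"
    by (rule borel_integrable_atLeastAtMost')
  have "(\<lambda>u. h (u * w)) holomorphic_on cball 0 1"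
    by (intro holomorphic_on_compose_gen[OF _ h, unfolded o_def]) (auto intro!: holomorphic_intros)
  from Cauchy_integral_circlepath_simple[OF this, of 0]
  have "((\<lambda>u. h (u * w) / u) has_contour_integral (2 * pi * \<i> * h 0)) (circlepath 0 1)"
    by simp
  then have "((\<lambda>t. h (cis t * w) / cis t * \<i> * cis t) has_integral (2 * pi * \<i> * h 0)) {0..2*pi}"
    unfolding circlepath_def by (subst (asm) has_contour_integral_part_circlepath_iff) auto
  then have "((\<lambda>t. \<i> * h (cis t * w)) has_integral (2 * pi * \<i> * h 0)) {0..2*pi}"
    by (rule has_integral_eq[rotated]) (simp add: cis_neq_zero)
  from has_integral_mult_right[OF this, of "- \<i>"]
  have "((\<lambda>t. h (cis t * w)) has_integral 2 * pi * h 0) {0..2*pi}"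
    by (simp add: algebra_simps)
  then show "(LINT t:{0..2*pi}|lborel. h (cis t * w)) = 2 * pi * h 0"
    using set_borel_integral_eq_integral(2)[OF int] by (simp add: integral_unique)
qed

abbreviation fock_weight :: "complex \<Rightarrow> real" where
  "fock_weight w \<equiv> exp (- pi * (cmod w)\<^sup>2)"

lemma has_bochner_integral_fock_weight: "has_bochner_integral lborel fock_weight 1"
  using has_bochner_integral_gaussian_complex[of pi] by simp

lemma holomorphic_gaussian_mean:
  fixes h :: "complex \<Rightarrow> complex"
  assumes h: "h holomorphic_on UNIV" and int: "integrable lborel (\<lambda>w. h w * fock_weight w)"
  shows "(\<integral>w. h w * fock_weight w \<partial>lborel) = h 0"
proof -
  have "(LINT t:{0..2*pi}|lborel. h (cis t * w) * fock_weight (cis t * w)) = 2 * pi * h 0 * fock_weight w" for w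
    using holomorphic_circle_mean[OF h, of w] by (simp add: norm_mult set_integral_mult_left)
  then have "2 * pi * (\<integral>w. h w * fock_weight w \<partial>lborel) = (\<integral>w. 2 * pi * h 0 * fock_weight w \<partial>lborel)"
    using integral_rotation_average[OF int] by simp
  also have "\<dots> = 2 * pi * h 0"
    using has_bochner_integral_fock_weight by (simp add: has_bochner_integral_iff)
  finally show ?thesis by simp
qed

section \<open>The Fock space\<close>

lemma fock_spaceD:
  assumes "f \<in> fock_space"
  shows "f holomorphic_on UNIV" "integrable lborel (\<lambda>w. (cmod (f w))\<^sup>2 * fock_weight w)"
    "continuous_on UNIV f" "f \<in> borel_measurable borel"
  using assms unfolding fock_space_def
  by (auto intro: holomorphic_on_imp_continuous_on borel_measurable_continuous_onI)

lemma zero_in_fock_space: "(\<lambda>_. 0) \<in> fock_space"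
  by (simp add: fock_space_def)

lemma fock_norm_zero: "fock_norm (\<lambda>_. 0) = 0"
  by (simp add: fock_norm_def fock_inner_def)

lemma fock_inner_self: "fock_inner f f = complex_of_real (\<integral>w. (cmod (f w))\<^sup>2 * fock_weight w \<partial>lborel)"
proof -
  have "(\<lambda>w. f w * cnj (f w) * fock_weight w) = (\<lambda>w. complex_of_real ((cmod (f w))\<^sup>2 * fock_weight w))"
    by (simp add: complex_norm_square[symmetric] del: of_real_exp)
  then show ?thesis
    unfolding fock_inner_def by (simp only: integral_complex_of_real)
qed

lemma power2_fock_norm: "(fock_norm f)\<^sup>2 = (\<integral>w. (cmod (f w))\<^sup>2 * fock_weight w \<partial>lborel)"
proof -
  have "0 \<le> (\<integral>w. (cmod (f w))\<^sup>2 * fock_weight w \<partial>lborel)"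
    by (simp add: integral_nonneg_AE)
  then show ?thesis
    by (simp add: fock_norm_def fock_inner_self)
qed

lemma fock_norm_nonneg: "fock_norm f \<ge> 0"
  unfolding fock_norm_def fock_inner_self by (simp add: integral_nonneg_AE)

lemma
  assumes f: "f \<in> fock_space" and g: "g \<in> fock_space"
  shows integrable_fock_norm_mult: "integrable lborel (\<lambda>w. cmod (f w) * cmod (g w) * fock_weight w)"
    and integrable_fock_mult_cnj: "integrable lborel (\<lambda>w. f w * cnj (g w) * fock_weight w)"
proof -
  note fD = fock_spaceD[OF f] and gD = fock_spaceD[OF g]
  have "cmod (f w) * cmod (g w) * fock_weight w \<le> ((cmod (f w))\<^sup>2 + (cmod (g w))\<^sup>2) / 2 * fock_weight w" for w
    using sum_squares_bound[of "cmod (f w)" "cmod (g w)"] by (intro mult_right_mono) auto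
  then have "cmod (f w) * cmod (g w) * fock_weight w
      \<le> ((cmod (f w))\<^sup>2 * fock_weight w + (cmod (g w))\<^sup>2 * fock_weight w) / 2" for w
    by (simp add: field_simps)
  moreover have "integrable lborel (\<lambda>w. ((cmod (f w))\<^sup>2 * fock_weight w + (cmod (g w))\<^sup>2 * fock_weight w) / 2)"
    using fD(2) gD(2) by (intro integrable_divide Bochner_Integration.integrable_add)
  moreover have "(\<lambda>w. cmod (f w) * cmod (g w) * fock_weight w) \<in> borel_measurable lborel"
    using fD(4) gD(4) by measurable
  ultimately show int: "integrable lborel (\<lambda>w. cmod (f w) * cmod (g w) * fock_weight w)"
    by (intro Bochner_Integration.integrable_bound[where g = "\<lambda>w. cmod (f w) * cmod (g w) * fock_weight w"]) auto
  have "continuous_on UNIV (\<lambda>w. f w * cnj (g w) * fock_weight w)"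
    using fD(3) gD(3) by (intro continuous_intros) auto
  then have "(\<lambda>w. f w * cnj (g w) * fock_weight w) \<in> borel_measurable lborel"
    by (simp add: measurable_lborel1 borel_measurable_continuous_onI)
  then show "integrable lborel (\<lambda>w. f w * cnj (g w) * fock_weight w)"
    by (rule Bochner_Integration.integrable_bound[OF int]) (simp add: norm_mult)
qed

lemma integral_mult_le_sqrt_integral_power2:
  fixes \<phi> \<psi> :: "'a \<Rightarrow> real"
  assumes [measurable]: "\<phi> \<in> borel_measurable M" "\<psi> \<in> borel_measurable M"
    and nonneg: "\<And>x. 0 \<le> \<phi> x" "\<And>x. 0 \<le> \<psi> x"
    and int: "integrable M (\<lambda>x. \<phi> x * \<psi> x)" "integrable M (\<lambda>x. (\<phi> x)\<^sup>2)" "integrable M (\<lambda>x. (\<psi> x)\<^sup>2)"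
  shows "(\<integral>x. \<phi> x * \<psi> x \<partial>M) \<le> sqrt (\<integral>x. (\<phi> x)\<^sup>2 \<partial>M) * sqrt (\<integral>x. (\<psi> x)\<^sup>2 \<partial>M)"
proof -
  have "(\<integral>\<^sup>+x. ennreal (\<phi> x) * ennreal (\<psi> x) \<partial>M) = ennreal (\<integral>x. \<phi> x * \<psi> x \<partial>M)"
    using int(1) nonneg by (simp add: ennreal_mult[symmetric] nn_integral_eq_integral)
  moreover have "(\<integral>\<^sup>+x. ennreal (\<phi> x) ^ 2 \<partial>M) = ennreal (\<integral>x. (\<phi> x)\<^sup>2 \<partial>M)"
    and "(\<integral>\<^sup>+x. ennreal (\<psi> x) ^ 2 \<partial>M) = ennreal (\<integral>x. (\<psi> x)\<^sup>2 \<partial>M)"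
    using int(2,3) nonneg by (simp_all add: ennreal_power nn_integral_eq_integral)
  ultimately have "ennreal (\<integral>x. \<phi> x * \<psi> x \<partial>M) ^ 2 \<le> ennreal (\<integral>x. (\<phi> x)\<^sup>2 \<partial>M) * ennreal (\<integral>x. (\<psi> x)\<^sup>2 \<partial>M)"
    using Cauchy_Schwarz_nn_integral[of "\<lambda>x. ennreal (\<phi> x)" M "\<lambda>x. ennreal (\<psi> x)"] by simp
  then have "(\<integral>x. \<phi> x * \<psi> x \<partial>M)\<^sup>2 \<le> (\<integral>x. (\<phi> x)\<^sup>2 \<partial>M) * (\<integral>x. (\<psi> x)\<^sup>2 \<partial>M)"
    using nonneg by (simp add: ennreal_power ennreal_mult[symmetric] integral_nonneg_AE)
  then show ?thesis
    by (simp add: real_le_rsqrt flip: real_sqrt_mult)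
qed

lemma fock_integral_norm_mult_le:
  assumes f: "f \<in> fock_space" and g: "g \<in> fock_space"
  shows "(\<integral>w. cmod (f w) * cmod (g w) * fock_weight w \<partial>lborel) \<le> fock_norm f * fock_norm g"
proof -
  define E where "E w = exp (- pi * (cmod w)\<^sup>2 / 2)" for w
  have EE: "E w * E w = fock_weight w" for w
    by (simp add: E_def flip: exp_add)
  have prod: "cmod (f w) * E w * (cmod (g w) * E w) = cmod (f w) * cmod (g w) * fock_weight w"
    and sq: "(cmod (h w) * E w)\<^sup>2 = (cmod (h w))\<^sup>2 * fock_weight w" for w and h :: "complex \<Rightarrow> complex"
    by (simp_all only: power_mult_distrib power2_eq_square[of "E w"] EE[symmetric] mult_ac)
  have [measurable]: "f \<in> borel_measurable lborel" "g \<in> borel_measurable lborel"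
    using fock_spaceD(4) f g by (auto simp: measurable_lborel1)
  have [measurable]: "E \<in> borel_measurable lborel"
    unfolding E_def measurable_lborel1 by measurable
  have "0 \<le> E w" for w
    by (simp add: E_def)
  then have "(\<integral>w. cmod (f w) * E w * (cmod (g w) * E w) \<partial>lborel)
      \<le> sqrt (\<integral>w. (cmod (f w) * E w)\<^sup>2 \<partial>lborel) * sqrt (\<integral>w. (cmod (g w) * E w)\<^sup>2 \<partial>lborel)"
    using integrable_fock_norm_mult[OF f g] fock_spaceD(2)[OF f] fock_spaceD(2)[OF g]
    by (intro integral_mult_le_sqrt_integral_power2) (simp_all only: prod sq, auto)
  then show ?thesis
    by (simp only: prod sq power2_fock_norm[symmetric] real_sqrt_abs abs_of_nonneg fock_norm_nonneg)
qed

lemma fock_inner_norm_le: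
  assumes "f \<in> fock_space" and "g \<in> fock_space"
  shows "cmod (fock_inner f g) \<le> fock_norm f * fock_norm g"
proof -
  have "cmod (fock_inner f g) \<le> (\<integral>w. norm (f w * cnj (g w) * fock_weight w) \<partial>lborel)"
    unfolding fock_inner_def by (rule integral_norm_bound)
  also have "\<dots> = (\<integral>w. cmod (f w) * cmod (g w) * fock_weight w \<partial>lborel)"
    by (simp add: norm_mult)
  also have "\<dots> \<le> fock_norm f * fock_norm g"
    using assms by (rule fock_integral_norm_mult_le)
  finally show ?thesis .
qed

lemma fock_inner_lincomb_left:
  assumes "f \<in> fock_space" and "g \<in> fock_space" and "e \<in> fock_space"
  shows "fock_inner (\<lambda>w. a * f w + b * g w) e = a * fock_inner f e + b * fock_inner g e"
proof -
  have "(a * f w + b * g w) * cnj (e w) * fock_weight w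
      = a * (f w * cnj (e w) * fock_weight w) + b * (g w * cnj (e w) * fock_weight w)" for w
    by (simp add: algebra_simps)
  then show ?thesis
    using integrable_fock_mult_cnj[OF assms(1,3)] integrable_fock_mult_cnj[OF assms(2,3)]
    by (simp add: fock_inner_def del: of_real_exp)
qed

lemma fock_inner_commute: "fock_inner g f = cnj (fock_inner f g)"
proof -
  have "fock_inner g f = (\<integral>w. cnj (f w * cnj (g w) * fock_weight w) \<partial>lborel)"
    unfolding fock_inner_def by (simp add: mult_ac del: of_real_exp)
  also have "\<dots> = cnj (fock_inner f g)"
    unfolding fock_inner_def by (rule Bochner_Integration.integral_cnj)
  finally show ?thesis .
qed

lemma fock_norm_scale: "fock_norm (\<lambda>w. a * f w) = cmod a * fock_norm f"
proof -
  have "(fock_norm (\<lambda>w. a * f w))\<^sup>2 = (cmod a * fock_norm f)\<^sup>2"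
    by (simp add: power2_fock_norm norm_mult power_mult_distrib mult.assoc)
  then show ?thesis
    by (simp add: fock_norm_nonneg power2_eq_iff_nonneg)
qed

lemma fock_space_lincomb:
  assumes f: "f \<in> fock_space" and g: "g \<in> fock_space"
  shows "(\<lambda>w. a * f w + b * g w) \<in> fock_space"
    and "fock_norm (\<lambda>w. a * f w + b * g w) \<le> cmod a * fock_norm f + cmod b * fock_norm g"
proof -
  note fD = fock_spaceD[OF f] and gD = fock_spaceD[OF g]
  define P where "P w = (cmod a)\<^sup>2 * ((cmod (f w))\<^sup>2 * fock_weight w)
      + 2 * cmod a * cmod b * (cmod (f w) * cmod (g w) * fock_weight w)
      + (cmod b)\<^sup>2 * ((cmod (g w))\<^sup>2 * fock_weight w)" for w
  have P_int: "integrable lborel P"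
    unfolding P_def using fD(2) gD(2) integrable_fock_norm_mult[OF f g] by auto
  have bound: "(cmod (a * f w + b * g w))\<^sup>2 * fock_weight w \<le> P w" for w
  proof -
    have "(cmod (a * f w + b * g w))\<^sup>2 * fock_weight w
        \<le> (cmod a * cmod (f w) + cmod b * cmod (g w))\<^sup>2 * fock_weight w"
      by (intro mult_right_mono power_mono) (auto intro: norm_triangle_le simp: norm_mult)
    also have "\<dots> = P w"
      unfolding P_def by (simp add: power2_eq_square algebra_simps)
    finally show ?thesis .
  qed
  have "continuous_on UNIV (\<lambda>w. (cmod (a * f w + b * g w))\<^sup>2 * fock_weight w)"
    using fD(3) gD(3) by (intro continuous_intros) auto
  then have int: "integrable lborel (\<lambda>w. (cmod (a * f w + b * g w))\<^sup>2 * fock_weight w)"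
    using bound by (intro Bochner_Integration.integrable_bound[OF P_int])
      (auto simp: measurable_lborel1 borel_measurable_continuous_onI intro: order_trans[OF _ abs_ge_self])
  show "(\<lambda>w. a * f w + b * g w) \<in> fock_space"
    unfolding fock_space_def using fD(1) gD(1) int by (auto intro!: holomorphic_intros)
  have "(fock_norm (\<lambda>w. a * f w + b * g w))\<^sup>2 \<le> integral\<^sup>L lborel P"
    unfolding power2_fock_norm using int P_int bound by (rule integral_mono)
  also have "\<dots> = (cmod a * fock_norm f)\<^sup>2 + 2 * cmod a * cmod b
      * (\<integral>w. cmod (f w) * cmod (g w) * fock_weight w \<partial>lborel) + (cmod b * fock_norm g)\<^sup>2"
    unfolding P_def using fD(2) gD(2) integrable_fock_norm_mult[OF f g]
    by (simp add: power2_fock_norm power_mult_distrib)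
  also have "\<dots> \<le> (cmod a * fock_norm f)\<^sup>2 + 2 * cmod a * cmod b * (fock_norm f * fock_norm g)
      + (cmod b * fock_norm g)\<^sup>2"
    using fock_integral_norm_mult_le[OF f g] by (simp add: mult_left_mono)
  also have "\<dots> = (cmod a * fock_norm f + cmod b * fock_norm g)\<^sup>2"
    by (simp add: power2_eq_square algebra_simps)
  finally show "fock_norm (\<lambda>w. a * f w + b * g w) \<le> cmod a * fock_norm f + cmod b * fock_norm g"
    by (rule power2_le_imp_le) (simp add: fock_norm_nonneg)
qed

lemma fock_space_scale: "f \<in> fock_space \<Longrightarrow> (\<lambda>w. a * f w) \<in> fock_space"
  using fock_space_lincomb(1)[of f f a 0] by simp

lemma power_le_power_mult_exp:
  fixes x :: real
  assumes "x \<ge> 0"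
  shows "x ^ n \<le> (real n) ^ n * exp x"
proof (cases "n = 0")
  case False
  then have n: "real n > 0" by simp
  have "(x / real n) ^ n \<le> (1 + x / real n) ^ n"
    using assms n by (intro power_mono) auto
  also have "\<dots> \<le> exp x"
    using assms False by (intro exp_ge_one_plus_x_over_n_power_n) auto
  finally show ?thesis
    using n by (simp add: power_divide field_simps)
qed (use assms in simp)

lemma fock_basis_in_fock_space: "fock_basis j \<in> fock_space"
proof -
  have bound: "((cmod w)\<^sup>2) ^ j * fock_weight w \<le> (2 * real j / pi) ^ j * exp (- (pi / 2) * (cmod w)\<^sup>2)" for w
  proof -
    define s where "s = (cmod w)\<^sup>2"
    have "(pi / 2 * s) ^ j \<le> (real j) ^ j * exp (pi / 2 * s)"
      by (intro power_le_power_mult_exp) (simp add: s_def)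
    then have "s ^ j * exp (- pi * s) \<le> (2 / pi) ^ j * (real j) ^ j * exp (pi / 2 * s) * exp (- pi * s)"
      by (intro mult_right_mono) (simp_all add: power_mult_distrib field_simps)
    also have "\<dots> = (2 / pi) ^ j * (real j) ^ j * (exp (pi / 2 * s) * exp (- pi * s))"
      by (simp only: mult.assoc)
    also have "exp (pi / 2 * s) * exp (- pi * s) = exp (- (pi / 2) * s)"
      by (simp add: exp_add[symmetric])
    also have "(2 / pi) ^ j * (real j) ^ j = (2 * real j / pi) ^ j"
      by (simp add: power_mult_distrib[symmetric])
    finally show ?thesis unfolding s_def .
  qed
  have "integrable lborel (\<lambda>w::complex. (2 * real j / pi) ^ j * exp (- (pi / 2) * (cmod w)\<^sup>2))"
    using has_bochner_integral_gaussian_complex[of "pi / 2"] by (auto simp: has_bochner_integral_iff)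
  then have "integrable lborel (\<lambda>w. ((cmod w)\<^sup>2) ^ j * fock_weight w)"
    by (rule Bochner_Integration.integrable_bound) (use bound in \<open>auto simp: measurable_lborel1\<close>)
  then have "integrable lborel (\<lambda>w. pi ^ j / fact j * (((cmod w)\<^sup>2) ^ j * fock_weight w))"
    by simp
  moreover have "(cmod (fock_basis j w))\<^sup>2 = pi ^ j / fact j * ((cmod w)\<^sup>2) ^ j" for w
    by (simp add: fock_basis_def norm_mult norm_power power_mult_distrib power_mult[symmetric] mult.commute)
  ultimately show ?thesis
    unfolding fock_space_def fock_basis_def by (auto intro!: holomorphic_intros simp: mult.assoc)
qed

lemma norm_fock_kernel_sq: "(cmod (fock_kernel z w))\<^sup>2 * fock_weight w = fock_weight (w - z)"
proof -
  have "(cmod (fock_kernel z w))\<^sup>2 = exp (2 * pi * (Re z * Re w + Im z * Im w) - pi * (cmod z)\<^sup>2)"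
    unfolding fock_kernel_def by (simp add: power2_eq_square exp_add[symmetric] algebra_simps)
  then have "(cmod (fock_kernel z w))\<^sup>2 * fock_weight w
      = exp (2 * pi * (Re z * Re w + Im z * Im w) - pi * (cmod z)\<^sup>2 + - pi * (cmod w)\<^sup>2)"
    by (simp only: mult_exp_exp)
  also have "2 * pi * (Re z * Re w + Im z * Im w) - pi * (cmod z)\<^sup>2 + - pi * (cmod w)\<^sup>2 = - pi * (cmod (w - z))\<^sup>2"
    unfolding cmod_power2 by (simp add: power2_eq_square algebra_simps)
  finally show ?thesis .
qed

lemma complex_of_real_cmod_power2: "(complex_of_real (cmod z))\<^sup>2 = z * cnj z"
  by (simp flip: complex_norm_square)

lemma fock_weight_complex: "complex_of_real (fock_weight w) = exp (- (pi * (w * cnj w)))"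
  by (simp add: of_real_exp complex_of_real_cmod_power2)

lemma cnj_fock_kernel:
  fixes z w :: complex
  shows "cnj (fock_kernel z w) = exp (pi * z * cnj w - pi * (z * cnj z) / 2)"
  unfolding fock_kernel_def by (simp add: exp_cnj complex_of_real_cmod_power2 mult.commute)

lemma fock_kernel_shift:
  "cnj (fock_kernel z (z + u)) * fock_weight (z + u)
     = exp (- pi * cnj z * u) * fock_weight u * exp (- pi * (cmod z)\<^sup>2 / 2)"
proof -
  have "cnj (fock_kernel z (z + u)) * fock_weight (z + u)
      = exp (pi * z * cnj (z + u) - pi * (z * cnj z) / 2 + - (pi * ((z + u) * cnj (z + u))))"
    unfolding cnj_fock_kernel fock_weight_complex by (simp only: mult_exp_exp)
  also have "\<dots> = exp (- pi * cnj z * u + - (pi * (u * cnj u)) + - pi * (z * cnj z) / 2)"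
    by (simp add: algebra_simps)
  also have "\<dots> = exp (- pi * cnj z * u) * exp (- (pi * (u * cnj u))) * exp (- pi * (z * cnj z) / 2)"
    by (simp only: exp_add)
  also have "\<dots> = exp (- pi * cnj z * u) * fock_weight u * exp (- pi * (cmod z)\<^sup>2 / 2)"
    by (simp add: fock_weight_complex of_real_exp complex_of_real_cmod_power2)
  finally show ?thesis .
qed

lemma
  shows fock_kernel_in_fock_space: "fock_kernel z \<in> fock_space"
    and fock_norm_kernel: "fock_norm (fock_kernel z) = 1"
proof -
  have "has_bochner_integral lborel (\<lambda>w. fock_weight (- z + w)) 1"
    using has_bochner_integral_fock_weight integrable_lborel_translate[of fock_weight "- z"]
      integral_lborel_translate[of fock_weight "- z"]
    by (simp add: has_bochner_integral_iff)
  then have "has_bochner_integral lborel (\<lambda>w. (cmod (fock_kernel z w))\<^sup>2 * fock_weight w) 1"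
    unfolding norm_fock_kernel_sq by simp
  then show "fock_kernel z \<in> fock_space" and "fock_norm (fock_kernel z) = 1"
    unfolding fock_space_def fock_norm_def fock_inner_self fock_kernel_def
    by (auto simp: has_bochner_integral_iff intro!: holomorphic_intros)
qed

text \<open>Translating the integral by \<open>z\<close> turns the reproducing formula into the Gaussian mean value
  of the entire function \<open>u \<mapsto> f (z + u) exp (- pi cnj z u)\<close> at \<open>0\<close>.\<close>

lemma fock_inner_kernel:
  assumes f: "f \<in> fock_space"
  shows "fock_inner f (fock_kernel z) = f z * exp (- pi * (cmod z)\<^sup>2 / 2)"
proof -
  define E where "E = complex_of_real (exp (- pi * (cmod z)\<^sup>2 / 2))"
  define F where "F w = f w * cnj (fock_kernel z w) * fock_weight w" for w
  define h where "h u = f (z + u) * exp (- pi * cnj z * u)" for u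
  have F_int: "integrable lborel F"
    unfolding F_def by (rule integrable_fock_mult_cnj[OF f fock_kernel_in_fock_space])
  have F_meas: "F \<in> borel_measurable borel"
    using borel_measurable_integrable[OF F_int] by simp
  have F_shift: "F (z + u) = h u * fock_weight u * E" for u
    using fock_kernel_shift[of z u] by (simp add: F_def h_def E_def mult_ac)
  have h_holo: "h holomorphic_on UNIV"
    unfolding h_def
    by (intro holomorphic_intros holomorphic_on_compose_gen[OF _ fock_spaceD(1)[OF f], unfolded o_def]) auto
  have "integrable lborel (\<lambda>u. F (z + u))"
    using F_int F_meas by (simp add: integrable_lborel_translate)
  then have "integrable lborel (\<lambda>u. h u * fock_weight u * E * inverse E)"
    unfolding F_shift by (rule integrable_mult_left)
  then have h_int: "integrable lborel (\<lambda>u. h u * fock_weight u)"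
    by (simp add: E_def mult.assoc)
  have "fock_inner f (fock_kernel z) = integral\<^sup>L lborel F"
    unfolding fock_inner_def F_def ..
  also have "\<dots> = (\<integral>u. F (z + u) \<partial>lborel)"
    using F_meas by (simp add: integral_lborel_translate)
  also have "\<dots> = (\<integral>u. h u * fock_weight u \<partial>lborel) * E"
    unfolding F_shift by simp
  also have "\<dots> = h 0 * E"
    by (simp only: holomorphic_gaussian_mean[OF h_holo h_int])
  also have "\<dots> = f z * exp (- pi * (cmod z)\<^sup>2 / 2)"
    by (simp add: h_def E_def)
  finally show ?thesis .
qed

lemma fock_point_bound:
  assumes "f \<in> fock_space"
  shows "cmod (f z) \<le> fock_norm f * exp (pi * (cmod z)\<^sup>2 / 2)"
proof -
  have "cmod (f z) * exp (- pi * (cmod z)\<^sup>2 / 2) = cmod (fock_inner f (fock_kernel z))"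
    by (simp add: fock_inner_kernel[OF assms] norm_mult)
  also have "\<dots> \<le> fock_norm f"
    using fock_inner_norm_le[OF assms fock_kernel_in_fock_space] by (simp add: fock_norm_kernel)
  finally show ?thesis
    by (simp add: exp_minus field_simps)
qed

section \<open>Bounded, nuclear and finite-rank operators\<close>

lemma fock_bounded_rank_one:
  assumes g: "g \<in> fock_space" and p: "p \<in> fock_space"
  shows "fock_bounded (\<lambda>f w. fock_inner f g * p w)"
  unfolding fock_bounded_def
proof (intro conjI ballI allI exI)
  fix f assume f: "f \<in> fock_space"
  show "(\<lambda>w. fock_inner f g * p w) \<in> fock_space"
    using p by (rule fock_space_scale)
  have "fock_norm (\<lambda>w. fock_inner f g * p w) = cmod (fock_inner f g) * fock_norm p"
    by (rule fock_norm_scale)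
  also have "\<dots> \<le> fock_norm f * fock_norm g * fock_norm p"
    by (intro mult_right_mono fock_inner_norm_le f g fock_norm_nonneg)
  finally show "fock_norm (\<lambda>w. fock_inner f g * p w) \<le> fock_norm g * fock_norm p * fock_norm f"
    by (simp add: mult_ac)
next
  fix f h a b assume "f \<in> fock_space" "h \<in> fock_space"
  then show "(\<lambda>w. fock_inner (\<lambda>w. a * f w + b * h w) g * p w)
      = (\<lambda>w. a * (fock_inner f g * p w) + b * (fock_inner h g * p w))"
    by (simp add: fock_inner_lincomb_left[OF _ _ g] algebra_simps)
qed

lemma fock_bounded_lincomb:
  assumes S: "fock_bounded S" and T: "fock_bounded T"
  shows "fock_bounded (\<lambda>f w. a * S f w + b * T f w)"
proof -
  obtain C D where C: "\<And>f. f \<in> fock_space \<Longrightarrow> fock_norm (S f) \<le> C * fock_norm f"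
    and D: "\<And>f. f \<in> fock_space \<Longrightarrow> fock_norm (T f) \<le> D * fock_norm f"
    using S T unfolding fock_bounded_def by metis
  have ST: "\<And>f. f \<in> fock_space \<Longrightarrow> S f \<in> fock_space \<and> T f \<in> fock_space"
    using S T unfolding fock_bounded_def by blast
  show ?thesis
    unfolding fock_bounded_def
  proof (intro conjI ballI allI exI)
    fix f assume f: "f \<in> fock_space"
    then show "(\<lambda>w. a * S f w + b * T f w) \<in> fock_space"
      using ST fock_space_lincomb(1) by blast
    have "fock_norm (\<lambda>w. a * S f w + b * T f w) \<le> cmod a * fock_norm (S f) + cmod b * fock_norm (T f)"
      using ST[OF f] fock_space_lincomb(2) by blast
    also have "\<dots> \<le> cmod a * (C * fock_norm f) + cmod b * (D * fock_norm f)"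
      by (intro add_mono mult_left_mono C D f) auto
    finally show "fock_norm (\<lambda>w. a * S f w + b * T f w) \<le> (cmod a * C + cmod b * D) * fock_norm f"
      by (simp add: algebra_simps)
  next
    fix f h \<alpha> \<beta> assume "f \<in> fock_space" "h \<in> fock_space"
    with S T have "S (\<lambda>w. \<alpha> * f w + \<beta> * h w) = (\<lambda>w. \<alpha> * S f w + \<beta> * S h w)"
      and "T (\<lambda>w. \<alpha> * f w + \<beta> * h w) = (\<lambda>w. \<alpha> * T f w + \<beta> * T h w)"
      unfolding fock_bounded_def by blast+
    then show "(\<lambda>w. a * S (\<lambda>w. \<alpha> * f w + \<beta> * h w) w + b * T (\<lambda>w. \<alpha> * f w + \<beta> * h w) w)
        = (\<lambda>w. \<alpha> * (a * S f w + b * T f w) + \<beta> * (a * S h w + b * T h w))"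
      by (simp add: algebra_simps)
  qed
qed

lemma fock_inner_suminf_left:
  assumes \<phi>: "\<And>k. \<phi> k \<in> fock_space" and \<psi>: "\<psi> \<in> fock_space"
    and sm: "summable (\<lambda>k. cmod (c k) * fock_norm (\<phi> k))"
  shows "fock_inner (\<lambda>u. \<Sum>k. c k * \<phi> k u) \<psi> = (\<Sum>k. c k * fock_inner (\<phi> k) \<psi>)"
proof -
  define F where "F k = (\<lambda>u. c k * (\<phi> k u * cnj (\<psi> u) * fock_weight u))" for k
  have pointwise: "summable (\<lambda>k. cmod (c k * \<phi> k u))" for u
  proof (rule summable_comparison_test'[OF summable_mult2[OF sm, of "exp (pi * (cmod u)\<^sup>2 / 2)"]])
    show "norm (cmod (c k * \<phi> k u)) \<le> cmod (c k) * fock_norm (\<phi> k) * exp (pi * (cmod u)\<^sup>2 / 2)" for k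
      using fock_point_bound[OF \<phi>, of k u] by (simp add: norm_mult mult.assoc mult_left_mono)
  qed
  have "summable (\<lambda>k. norm (F k u))" for u
    using summable_mult2[OF pointwise[of u], of "cmod (\<psi> u) * fock_weight u"]
    by (simp add: F_def norm_mult mult_ac)
  moreover have "summable (\<lambda>k. \<integral>u. norm (F k u) \<partial>lborel)"
  proof (rule summable_comparison_test'[OF summable_mult2[OF sm, of "fock_norm \<psi>"]])
    fix k
    have "(\<integral>u. norm (F k u) \<partial>lborel) = cmod (c k) * (\<integral>u. cmod (\<phi> k u) * cmod (\<psi> u) * fock_weight u \<partial>lborel)"
      by (simp add: F_def norm_mult mult.assoc)
    also have "\<dots> \<le> cmod (c k) * (fock_norm (\<phi> k) * fock_norm \<psi>)"
      by (intro mult_left_mono fock_integral_norm_mult_le \<phi> \<psi>) auto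
    finally show "norm (\<integral>u. norm (F k u) \<partial>lborel) \<le> cmod (c k) * fock_norm (\<phi> k) * fock_norm \<psi>"
      by (simp add: integral_nonneg_AE mult.assoc)
  qed
  moreover have "integrable lborel (F k)" for k
    unfolding F_def by (intro integrable_mult_right integrable_fock_mult_cnj \<phi> \<psi>)
  ultimately have "(\<integral>u. (\<Sum>k. F k u) \<partial>lborel) = (\<Sum>k. integral\<^sup>L lborel (F k))"
    by (intro integral_suminf) auto
  moreover have "(\<Sum>k. F k u) = (\<Sum>k. c k * \<phi> k u) * cnj (\<psi> u) * fock_weight u" for u
    using suminf_mult2[OF summable_norm_cancel[OF pointwise[of u]], of "cnj (\<psi> u) * fock_weight u"]
    by (simp add: F_def mult.assoc)
  ultimately show ?thesis
    by (simp add: fock_inner_def F_def)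
qed

definition fock_nuclear_repr ::
    "((complex \<Rightarrow> complex) \<Rightarrow> complex \<Rightarrow> complex) \<Rightarrow> (nat \<Rightarrow> complex \<Rightarrow> complex) \<Rightarrow> (nat \<Rightarrow> complex \<Rightarrow> complex) \<Rightarrow> bool"
  where "fock_nuclear_repr T f g \<longleftrightarrow>
    (\<forall>k. f k \<in> fock_space \<and> g k \<in> fock_space) \<and>
    summable (\<lambda>k. fock_norm (f k) * fock_norm (g k)) \<and>
    (\<forall>h\<in>fock_space. \<forall>w. T h w = (\<Sum>k. fock_inner h (g k) * f k w))"

lemma fock_trace_class_iff: "fock_trace_class T \<longleftrightarrow> fock_bounded T \<and> (\<exists>f g. fock_nuclear_repr T f g)"
  unfolding fock_trace_class_def fock_nuclear_repr_def by blast

definition nuclear_kernel :: "(nat \<Rightarrow> complex \<Rightarrow> complex) \<Rightarrow> (nat \<Rightarrow> complex \<Rightarrow> complex) \<Rightarrow> complex \<Rightarrow> complex \<Rightarrow> complex"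
  where "nuclear_kernel f g w u = (\<Sum>k. f k w * cnj (g k u))"

lemma summable_nuclear_kernel:
  assumes "fock_nuclear_repr T f g"
  shows "summable (\<lambda>k. cmod (f k w) * cmod (g k u))"
proof -
  have f: "\<And>k. f k \<in> fock_space" and g: "\<And>k. g k \<in> fock_space"
    and sm: "summable (\<lambda>k. fock_norm (f k) * fock_norm (g k))"
    using assms unfolding fock_nuclear_repr_def by auto
  let ?B = "exp (pi * (cmod w)\<^sup>2 / 2) * exp (pi * (cmod u)\<^sup>2 / 2)"
  show ?thesis
  proof (rule summable_comparison_test'[OF summable_mult2[OF sm, of ?B]])
    show "norm (cmod (f k w) * cmod (g k u)) \<le> fock_norm (f k) * fock_norm (g k) * ?B" for k
      using mult_mono[OF fock_point_bound[OF f, of k w] fock_point_bound[OF g, of k u]]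
      by (simp add: mult_ac fock_norm_nonneg)
  qed
qed

lemma berezin_nuclear:
  assumes T: "fock_nuclear_repr T f g"
  shows "berezin T z = fock_weight z * nuclear_kernel f g z z"
proof -
  have f: "\<And>k. f k \<in> fock_space" and g: "\<And>k. g k \<in> fock_space"
    and sm: "summable (\<lambda>k. fock_norm (f k) * fock_norm (g k))"
    and rep: "\<And>h. h \<in> fock_space \<Longrightarrow> T h = (\<lambda>w. \<Sum>k. fock_inner h (g k) * f k w)"
    using T unfolding fock_nuclear_repr_def by auto
  define E where "E = exp (- pi * (cmod z)\<^sup>2 / 2)"
  have EE: "E * E = fock_weight z"
    by (simp add: E_def flip: exp_add)
  have "summable (\<lambda>k. cmod (fock_inner (fock_kernel z) (g k)) * fock_norm (f k))"
  proof (rule summable_comparison_test'[OF sm])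
    show "norm (cmod (fock_inner (fock_kernel z) (g k)) * fock_norm (f k)) \<le> fock_norm (f k) * fock_norm (g k)" for k
      using fock_inner_norm_le[OF fock_kernel_in_fock_space g, of z k]
      by (simp add: fock_norm_kernel fock_norm_nonneg mult.commute mult_left_mono)
  qed
  then have "berezin T z = (\<Sum>k. fock_inner (fock_kernel z) (g k) * fock_inner (f k) (fock_kernel z))"
    unfolding berezin_def rep[OF fock_kernel_in_fock_space]
    by (rule fock_inner_suminf_left[OF f fock_kernel_in_fock_space])
  also have "\<dots> = (\<Sum>k. fock_weight z * (f k z * cnj (g k z)))"
  proof (rule suminf_cong)
    fix k
    have kernel: "fock_inner h (fock_kernel z) = h z * E" if "h \<in> fock_space" for h
      using fock_inner_kernel[OF that] by (simp add: E_def)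
    have "fock_inner (fock_kernel z) (g k) * fock_inner (f k) (fock_kernel z) = cnj (g k z * E) * (f k z * E)"
      by (simp add: fock_inner_commute[of "fock_kernel z"] kernel f g)
    also have "\<dots> = complex_of_real (E * E) * (f k z * cnj (g k z))"
      by (simp add: algebra_simps)
    finally show "fock_inner (fock_kernel z) (g k) * fock_inner (f k) (fock_kernel z)
        = fock_weight z * (f k z * cnj (g k z))"
      unfolding EE .
  qed
  also have "\<dots> = fock_weight z * nuclear_kernel f g z z"
    unfolding nuclear_kernel_def
    using summable_norm_cancel[of "\<lambda>k. f k z * cnj (g k z)"] summable_nuclear_kernel[OF T, of z z]
    by (simp add: suminf_mult norm_mult)
  finally show ?thesis .
qed

lemma suminf_cnj: "summable f \<Longrightarrow> (\<Sum>n. cnj (f n)) = cnj (suminf f)"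
  by (rule sums_unique[symmetric]) (simp add: sums_cnj summable_sums)

lemma nuclear_apply_eq_inner:
  assumes T: "fock_nuclear_repr T f g" and h: "h \<in> fock_space"
  shows "T h w = fock_inner h (\<lambda>u. cnj (nuclear_kernel f g w u))"
proof -
  have f: "\<And>k. f k \<in> fock_space" and g: "\<And>k. g k \<in> fock_space"
    and sm: "summable (\<lambda>k. fock_norm (f k) * fock_norm (g k))"
    and rep: "T h w = (\<Sum>k. fock_inner h (g k) * f k w)"
    using T h unfolding fock_nuclear_repr_def by auto
  have cnj_kernel: "cnj (nuclear_kernel f g w u) = (\<Sum>k. cnj (f k w) * g k u)" for u
    unfolding nuclear_kernel_def
    using summable_norm_cancel[of "\<lambda>k. f k w * cnj (g k u)"] summable_nuclear_kernel[OF T, of w u]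
    by (simp add: norm_mult flip: suminf_cnj)
  have sm_fw: "summable (\<lambda>k. cmod (cnj (f k w)) * fock_norm (g k))"
  proof (rule summable_comparison_test'[OF summable_mult2[OF sm, of "exp (pi * (cmod w)\<^sup>2 / 2)"]])
    show "norm (cmod (cnj (f k w)) * fock_norm (g k))
        \<le> fock_norm (f k) * fock_norm (g k) * exp (pi * (cmod w)\<^sup>2 / 2)" for k
      using mult_left_mono[OF fock_point_bound[OF f, of k w] fock_norm_nonneg[of "g k"]]
      by (simp add: mult_ac fock_norm_nonneg)
  qed
  have "summable (\<lambda>k. cnj (f k w) * fock_inner (g k) h)"
  proof (rule summable_norm_cancel, rule summable_comparison_test'[OF summable_mult2[OF sm_fw, of "fock_norm h"]])
    show "norm (norm (cnj (f k w) * fock_inner (g k) h)) \<le> cmod (cnj (f k w)) * fock_norm (g k) * fock_norm h" for k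
      using mult_left_mono[OF fock_inner_norm_le[OF g h, of k] norm_ge_zero[of "cnj (f k w)"]]
      by (simp add: norm_mult mult_ac)
  qed
  then have "T h w = cnj (\<Sum>k. cnj (f k w) * fock_inner (g k) h)"
    by (simp add: rep fock_inner_commute[of "g _"] mult.commute flip: suminf_cnj)
  also have "(\<Sum>k. cnj (f k w) * fock_inner (g k) h) = fock_inner (\<lambda>u. \<Sum>k. cnj (f k w) * g k u) h"
    by (rule fock_inner_suminf_left[OF g h sm_fw, symmetric])
  also have "cnj \<dots> = fock_inner h (\<lambda>u. \<Sum>k. cnj (f k w) * g k u)"
    by (simp add: fock_inner_commute[of h])
  finally show ?thesis
    unfolding cnj_kernel by simp
qed

lemma fock_point_bound_le:
  assumes "f \<in> fock_space" and "cmod z \<le> R"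
  shows "cmod (f z) \<le> fock_norm f * exp (pi * R\<^sup>2 / 2)"
proof -
  have "(cmod z)\<^sup>2 \<le> R\<^sup>2"
    using assms(2) by (intro power_mono) auto
  then have "fock_norm f * exp (pi * (cmod z)\<^sup>2 / 2) \<le> fock_norm f * exp (pi * R\<^sup>2 / 2)"
    by (intro mult_left_mono fock_norm_nonneg) auto
  with fock_point_bound[OF assms(1), of z] show ?thesis by linarith
qed

lemma holomorphic_fock_line_term:
  assumes f: "f \<in> fock_space" and g: "g \<in> fock_space"
  shows "(\<lambda>\<zeta>. f (\<alpha> * \<zeta> + a) * cnj (g (cnj (\<beta> * \<zeta> + b)))) holomorphic_on UNIV"
proof -
  have cnj_g: "(\<lambda>v. cnj (g (cnj v))) holomorphic_on UNIV"
    using holomorphic_on_compose_cnj_cnj[OF holomorphic_on_subset[OF fock_spaceD(1)[OF g] subset_UNIV]]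
    by (simp add: o_def)
  have "(\<lambda>\<zeta>. cnj (g (cnj (\<beta> * \<zeta> + b)))) holomorphic_on UNIV"
    by (rule holomorphic_on_compose_gen[OF _ cnj_g, unfolded o_def]) (auto intro!: holomorphic_intros)
  moreover have "(\<lambda>\<zeta>. f (\<alpha> * \<zeta> + a)) holomorphic_on UNIV"
    by (rule holomorphic_on_compose_gen[OF _ fock_spaceD(1)[OF f], unfolded o_def]) (auto intro!: holomorphic_intros)
  ultimately show ?thesis
    by (intro holomorphic_intros)
qed

text \<open>Weierstrass' M-test with the pointwise bound \<open>|f z| \<le> \<parallel>f\<parallel> exp (pi |z|\<^sup>2 / 2)\<close>.\<close>

lemma holomorphic_nuclear_kernel_line:
  assumes T: "fock_nuclear_repr T f g"
  shows "(\<lambda>\<zeta>. nuclear_kernel f g (\<alpha> * \<zeta> + a) (cnj (\<beta> * \<zeta> + b))) holomorphic_on UNIV"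
  unfolding nuclear_kernel_def
proof (rule holomorphic_uniform_sequence[where f = "\<lambda>n \<zeta>. \<Sum>k<n. f k (\<alpha> * \<zeta> + a) * cnj (g k (cnj (\<beta> * \<zeta> + b)))"])
  have f: "\<And>k. f k \<in> fock_space" and g: "\<And>k. g k \<in> fock_space"
    and sm: "summable (\<lambda>k. fock_norm (f k) * fock_norm (g k))"
    using T unfolding fock_nuclear_repr_def by auto
  show "(\<lambda>\<zeta>. \<Sum>k<n. f k (\<alpha> * \<zeta> + a) * cnj (g k (cnj (\<beta> * \<zeta> + b)))) holomorphic_on UNIV" for n
    by (intro holomorphic_on_sum holomorphic_fock_line_term f g)
  fix x :: complex
  define R S where "R = cmod \<alpha> * (cmod x + 1) + cmod a" and "S = cmod \<beta> * (cmod x + 1) + cmod b"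
  have "uniform_limit (cball x 1) (\<lambda>n \<zeta>. \<Sum>k<n. f k (\<alpha> * \<zeta> + a) * cnj (g k (cnj (\<beta> * \<zeta> + b))))
      (\<lambda>\<zeta>. \<Sum>k. f k (\<alpha> * \<zeta> + a) * cnj (g k (cnj (\<beta> * \<zeta> + b)))) sequentially"
  proof (rule Weierstrass_m_test[OF _ summable_mult2[OF sm, of "exp (pi * R\<^sup>2 / 2) * exp (pi * S\<^sup>2 / 2)"]])
    fix k \<zeta> assume "\<zeta> \<in> cball x 1"
    then have \<zeta>: "cmod \<zeta> \<le> cmod x + 1"
      using norm_triangle_ineq2[of \<zeta> x] by (auto simp: dist_norm norm_minus_commute)
    have "cmod (\<gamma> * \<zeta> + c) \<le> cmod \<gamma> * (cmod x + 1) + cmod c" for \<gamma> c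
      by (rule order_trans[OF norm_triangle_ineq]) (simp add: norm_mult mult_left_mono \<zeta>)
    then have "cmod (\<alpha> * \<zeta> + a) \<le> R" and "cmod (cnj (\<beta> * \<zeta> + b)) \<le> S"
      unfolding R_def S_def complex_mod_cnj by blast+
    from mult_mono[OF fock_point_bound_le[OF f this(1)] fock_point_bound_le[OF g this(2)]]
    show "norm (f k (\<alpha> * \<zeta> + a) * cnj (g k (cnj (\<beta> * \<zeta> + b))))
        \<le> fock_norm (f k) * fock_norm (g k) * (exp (pi * R\<^sup>2 / 2) * exp (pi * S\<^sup>2 / 2))"
      by (simp add: norm_mult mult_ac fock_norm_nonneg)
  qed
  then show "\<exists>d>0. cball x d \<subseteq> UNIV \<and> uniform_limit (cball x d)
      (\<lambda>n \<zeta>. \<Sum>k<n. f k (\<alpha> * \<zeta> + a) * cnj (g k (cnj (\<beta> * \<zeta> + b))))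
      (\<lambda>\<zeta>. \<Sum>k. f k (\<alpha> * \<zeta> + a) * cnj (g k (cnj (\<beta> * \<zeta> + b)))) sequentially"
    by (intro exI[of _ 1]) auto
qed simp

text \<open>Restricted to the lines \<open>\<zeta> \<mapsto> (\<zeta> + \<i> y, \<zeta> - \<i> y)\<close> and then \<open>\<eta> \<mapsto> (\<i> \<eta> + \<zeta>, - \<i> \<eta> + \<zeta>)\<close>,
  vanishing on real parameters propagates by analytic continuation.\<close>

lemma zero_if_zero_on_conj_diagonal:
  fixes P :: "complex \<Rightarrow> complex \<Rightarrow> complex"
  assumes hol: "\<And>\<alpha> \<beta> a b. (\<lambda>\<zeta>. P (\<alpha> * \<zeta> + a) (\<beta> * \<zeta> + b)) holomorphic_on UNIV"
    and zero: "\<And>z. P z (cnj z) = 0"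
  shows "P w v = 0"
proof -
  have limpt: "0 islimpt range complex_of_real"
    unfolding islimpt_approachable
  proof (intro allI impI)
    fix e :: real assume "e > 0"
    then show "\<exists>x'\<in>range complex_of_real. x' \<noteq> 0 \<and> dist x' 0 < e"
      using rangeI[of complex_of_real "e / 2"] by (intro bexI[of _ "complex_of_real (e / 2)"]) auto
  qed
  have line1: "P (1 * \<zeta> + \<i> * y) (1 * \<zeta> + - \<i> * y) = 0" for \<zeta> and y :: real
  proof (rule analytic_continuation[of "\<lambda>\<zeta>. P (1 * \<zeta> + \<i> * y) (1 * \<zeta> + - \<i> * y)" UNIV "range complex_of_real" 0])
    fix z assume "z \<in> range complex_of_real"
    then have "cnj (z + \<i> * y) = z + - \<i> * y"
      by (auto simp: complex_eq_iff)
    then show "P (1 * z + \<i> * y) (1 * z + - \<i> * y) = 0"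
      using zero[of "z + \<i> * y"] by simp
  qed (use hol[of 1 "\<i> * y" 1 "- \<i> * y"] limpt in auto)
  have line2: "P (\<i> * \<eta> + \<zeta>) (- \<i> * \<eta> + \<zeta>) = 0" for \<zeta> \<eta>
  proof (rule analytic_continuation[of "\<lambda>\<eta>. P (\<i> * \<eta> + \<zeta>) (- \<i> * \<eta> + \<zeta>)" UNIV "range complex_of_real" 0])
    fix z assume "z \<in> range complex_of_real"
    then obtain y where "z = complex_of_real y" by auto
    then show "P (\<i> * z + \<zeta>) (- \<i> * z + \<zeta>) = 0"
      using line1[of \<zeta> y] by (simp add: algebra_simps)
  qed (use hol[of \<i> \<zeta> "- \<i>" \<zeta>] limpt in auto)
  have "\<i> * ((w - v) / (2 * \<i>)) + (w + v) / 2 = w" and "- \<i> * ((w - v) / (2 * \<i>)) + (w + v) / 2 = v"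
    by (simp_all add: field_simps)
  with line2[where \<zeta> = "(w + v) / 2" and \<eta> = "(w - v) / (2 * \<i>)"] show ?thesis
    by simp
qed

text \<open>The Berezin transform determines the kernel on the diagonal, which determines the whole
  kernel, which determines the operator.\<close>

lemma berezin_inj_trace_class:
  assumes S: "fock_trace_class S" and T: "fock_trace_class T"
    and eq: "berezin S = berezin T" and h: "h \<in> fock_space"
  shows "S h = T h"
proof -
  obtain f g f' g' where Sr: "fock_nuclear_repr S f g" and Tr: "fock_nuclear_repr T f' g'"
    using S T unfolding fock_trace_class_iff by blast
  define P where "P w v = nuclear_kernel f g w (cnj v) - nuclear_kernel f' g' w (cnj v)" for w v
  have "P w v = 0" for w v
  proof (rule zero_if_zero_on_conj_diagonal[of P])
    show "(\<lambda>\<zeta>. P (\<alpha> * \<zeta> + a) (\<beta> * \<zeta> + b)) holomorphic_on UNIV" for \<alpha> \<beta> a b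
      unfolding P_def
      by (intro holomorphic_intros holomorphic_nuclear_kernel_line[OF Sr] holomorphic_nuclear_kernel_line[OF Tr])
    show "P z (cnj z) = 0" for z
      using eq berezin_nuclear[OF Sr, of z] berezin_nuclear[OF Tr, of z] by (simp add: P_def fun_eq_iff)
  qed
  then have "nuclear_kernel f g w u = nuclear_kernel f' g' w u" for w u
    using P_def[of w "cnj u"] by simp
  then show ?thesis
    using nuclear_apply_eq_inner[OF Sr h] nuclear_apply_eq_inner[OF Tr h] by (simp add: fun_eq_iff)
qed

lemma fock_nuclear_repr_finite:
  assumes "\<And>k. k < n \<Longrightarrow> f k \<in> fock_space \<and> g k \<in> fock_space"
    and "\<And>h w. h \<in> fock_space \<Longrightarrow> T h w = (\<Sum>k<n. fock_inner h (g k) * f k w)"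
  shows "fock_nuclear_repr T (\<lambda>k. if k < n then f k else (\<lambda>_. 0)) (\<lambda>k. if k < n then g k else (\<lambda>_. 0))"
proof -
  have "summable (\<lambda>k. fock_norm (if k < n then f k else (\<lambda>_. 0)) * fock_norm (if k < n then g k else (\<lambda>_. 0)))"
    by (intro summable_finite[of "{..<n}"]) (auto simp: fock_norm_zero)
  moreover have "(\<Sum>k<n. fock_inner h (g k) * f k w)
      = (\<Sum>k. fock_inner h (if k < n then g k else (\<lambda>_. 0)) * (if k < n then f k else (\<lambda>_. 0)) w)" for h w
    by (subst suminf_finite[of "{..<n}"]) auto
  ultimately show ?thesis
    using assms zero_in_fock_space unfolding fock_nuclear_repr_def by auto
qed

lemma berezin_finite_rank:
  fixes f g :: "nat \<Rightarrow> complex \<Rightarrow> complex"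
  assumes "\<And>k. k < n \<Longrightarrow> f k \<in> fock_space \<and> g k \<in> fock_space"
    and "\<And>h w. h \<in> fock_space \<Longrightarrow> T h w = (\<Sum>k<n. fock_inner h (g k) * f k w)"
  shows "berezin T z = fock_weight z * (\<Sum>k<n. f k z * cnj (g k z))"
proof -
  have "nuclear_kernel (\<lambda>k. if k < n then f k else (\<lambda>_. 0)) (\<lambda>k. if k < n then g k else (\<lambda>_. 0)) z z
      = (\<Sum>k<n. f k z * cnj (g k z))"
    unfolding nuclear_kernel_def by (subst suminf_finite[of "{..<n}"]) auto
  then show ?thesis
    using berezin_nuclear[OF fock_nuclear_repr_finite[OF assms], of z] by simp
qed

lemma fock_trace_class_finite_rank:
  fixes f g :: "nat \<Rightarrow> complex \<Rightarrow> complex"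
  assumes fg: "\<And>k. k < n \<Longrightarrow> f k \<in> fock_space \<and> g k \<in> fock_space"
    and T: "\<And>h w. h \<in> fock_space \<Longrightarrow> T h w = (\<Sum>k<n. fock_inner h (g k) * f k w)"
  shows "fock_trace_class T"
proof -
  have "fock_bounded (\<lambda>h w. \<Sum>k<n. fock_inner h (g k) * f k w)"
    using fg
  proof (induction n)
    case 0
    show ?case
      unfolding fock_bounded_def by (auto simp: zero_in_fock_space fock_norm_zero intro!: exI[of _ 0])
  next
    case (Suc n)
    have "fock_bounded (\<lambda>h w. 1 * (\<Sum>k<n. fock_inner h (g k) * f k w) + 1 * (fock_inner h (g n) * f n w))"
      using Suc by (intro fock_bounded_lincomb fock_bounded_rank_one) auto
    then show ?case
      by simp
  qed
  moreover have T': "T h = (\<lambda>w. \<Sum>k<n. fock_inner h (g k) * f k w)" if "h \<in> fock_space" for h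
    using T[OF that] by auto
  ultimately have "fock_bounded T"
    unfolding fock_bounded_def by (simp add: T' fock_space_lincomb)
  then show ?thesis
    unfolding fock_trace_class_iff using fock_nuclear_repr_finite[OF fg T] by blast
qed

section \<open>Laplacians of radial functions\<close>

lemma has_laplacian_unique:
  assumes "has_laplacian F G" and "has_laplacian F G'"
  shows "G = G'"
proof
  fix z
  obtain Fx Fy Fxx Fyy where A: "\<And>z. ((\<lambda>t::real. F (z + of_real t)) has_vector_derivative Fx z) (at 0) \<and>
      ((\<lambda>t::real. F (z + \<i> * of_real t)) has_vector_derivative Fy z) (at 0) \<and>
      ((\<lambda>t::real. Fx (z + of_real t)) has_vector_derivative Fxx z) (at 0) \<and>
      ((\<lambda>t::real. Fy (z + \<i> * of_real t)) has_vector_derivative Fyy z) (at 0) \<and>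
      G z = (Fxx z + Fyy z) / 4"
    using assms(1) unfolding has_laplacian_def by blast
  obtain Fx' Fy' Fxx' Fyy' where B: "\<And>z. ((\<lambda>t::real. F (z + of_real t)) has_vector_derivative Fx' z) (at 0) \<and>
      ((\<lambda>t::real. F (z + \<i> * of_real t)) has_vector_derivative Fy' z) (at 0) \<and>
      ((\<lambda>t::real. Fx' (z + of_real t)) has_vector_derivative Fxx' z) (at 0) \<and>
      ((\<lambda>t::real. Fy' (z + \<i> * of_real t)) has_vector_derivative Fyy' z) (at 0) \<and>
      G' z = (Fxx' z + Fyy' z) / 4"
    using assms(2) unfolding has_laplacian_def by blast
  have "Fx = Fx'" and "Fy = Fy'"
    using A B by (auto intro!: ext vector_derivative_unique_at)
  then have "Fxx z = Fxx' z" and "Fyy z = Fyy' z"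
    using A[of z] B[of z] by (auto intro: vector_derivative_unique_at)
  moreover have "G z = (Fxx z + Fyy z) / 4" and "G' z = (Fxx' z + Fyy' z) / 4"
    using A[of z] B[of z] by blast+
  ultimately show "G z = G' z"
    by metis
qed

lemma has_real_derivative_radial:
  assumes "\<And>s. (H has_real_derivative H' s) (at s)"
  shows "((\<lambda>t. H ((cmod (z + of_real t))\<^sup>2)) has_real_derivative H' ((cmod z)\<^sup>2) * (2 * Re z)) (at 0)"
    and "((\<lambda>t. H ((cmod (z + \<i> * of_real t))\<^sup>2)) has_real_derivative H' ((cmod z)\<^sup>2) * (2 * Im z)) (at 0)"
proof -
  have "((\<lambda>t. (Re z + t)\<^sup>2 + (Im z)\<^sup>2) has_real_derivative 2 * Re z) (at 0)"
    and "((\<lambda>t. (Re z)\<^sup>2 + (Im z + t)\<^sup>2) has_real_derivative 2 * Im z) (at 0)"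
    by (auto intro!: derivative_eq_intros)
  from DERIV_chain2[OF assms this(1)] DERIV_chain2[OF assms this(2)]
  show "((\<lambda>t. H ((cmod (z + of_real t))\<^sup>2)) has_real_derivative H' ((cmod z)\<^sup>2) * (2 * Re z)) (at 0)"
    and "((\<lambda>t. H ((cmod (z + \<i> * of_real t))\<^sup>2)) has_real_derivative H' ((cmod z)\<^sup>2) * (2 * Im z)) (at 0)"
    by (simp_all add: cmod_power2)
qed

lemma has_laplacian_radial:
  fixes G G' G'' :: "real \<Rightarrow> real"
  assumes G: "\<And>s. (G has_real_derivative G' s) (at s)" and G': "\<And>s. (G' has_real_derivative G'' s) (at s)"
  shows "has_laplacian (\<lambda>z. G ((cmod z)\<^sup>2)) (\<lambda>z. (cmod z)\<^sup>2 * G'' ((cmod z)\<^sup>2) + G' ((cmod z)\<^sup>2))"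
  unfolding has_laplacian_def
proof (intro exI allI conjI)
  fix z :: complex
  let ?s = "(cmod z)\<^sup>2"
  show "((\<lambda>t. complex_of_real (G ((cmod (z + of_real t))\<^sup>2))) has_vector_derivative
      of_real (G' ?s * (2 * Re z))) (at 0)"
    and "((\<lambda>t. complex_of_real (G ((cmod (z + \<i> * of_real t))\<^sup>2))) has_vector_derivative
      of_real (G' ?s * (2 * Im z))) (at 0)"
    by (intro has_vector_derivative_of_real has_real_derivative_radial[OF G])+
  have "((\<lambda>t. 2 * Re (z + of_real t)) has_real_derivative 2) (at 0)"
    and "((\<lambda>t. 2 * Im (z + \<i> * of_real t)) has_real_derivative 2) (at 0)"
    by (auto intro!: derivative_eq_intros)
  from DERIV_mult[OF has_real_derivative_radial(1)[OF G'] this(1)]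
    DERIV_mult[OF has_real_derivative_radial(2)[OF G'] this(2)]
  have dx: "((\<lambda>t. G' ((cmod (z + of_real t))\<^sup>2) * (2 * Re (z + of_real t))) has_real_derivative
      G'' ?s * (2 * Re z) * (2 * Re z) + G' ?s * 2) (at 0)"
    and dy: "((\<lambda>t. G' ((cmod (z + \<i> * of_real t))\<^sup>2) * (2 * Im (z + \<i> * of_real t))) has_real_derivative
      G'' ?s * (2 * Im z) * (2 * Im z) + G' ?s * 2) (at 0)"
    by (simp_all add: mult.commute)
  show "((\<lambda>t. complex_of_real (G' ((cmod (z + of_real t))\<^sup>2) * (2 * Re (z + of_real t))))
      has_vector_derivative of_real (G'' ?s * (2 * Re z) * (2 * Re z) + G' ?s * 2)) (at 0)"
    and "((\<lambda>t. complex_of_real (G' ((cmod (z + \<i> * of_real t))\<^sup>2) * (2 * Im (z + \<i> * of_real t))))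
      has_vector_derivative of_real (G'' ?s * (2 * Im z) * (2 * Im z) + G' ?s * 2)) (at 0)"
    using dx dy by (auto intro!: has_vector_derivative_of_real simp del: of_real_mult of_real_add)
  have "((Re z)\<^sup>2 + (Im z)\<^sup>2) * X + Y = ((X * (2 * Re z) * (2 * Re z) + Y * 2) + (X * (2 * Im z) * (2 * Im z) + Y * 2)) / 4"
    for X Y :: real
    by (simp add: power2_eq_square algebra_simps)
  from this[of "G'' ?s" "G' ?s"]
  have "?s * G'' ?s + G' ?s = ((G'' ?s * (2 * Re z) * (2 * Re z) + G' ?s * 2) + (G'' ?s * (2 * Im z) * (2 * Im z) + G' ?s * 2)) / 4"
    unfolding cmod_power2[of z, symmetric] .
  then show "complex_of_real (?s * G'' ?s + G' ?s) =
      (of_real (G'' ?s * (2 * Re z) * (2 * Re z) + G' ?s * 2) + of_real (G'' ?s * (2 * Im z) * (2 * Im z) + G' ?s * 2)) / 4"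
    by (simp only: of_real_add of_real_divide of_real_numeral)
qed

section \<open>The Berezin transform of \<open>E\<^sub>m\<close> and its Laplacian\<close>

definition fock_proj_profile :: "nat \<Rightarrow> real \<Rightarrow> real" where
  "fock_proj_profile m s = pi ^ m / fact m * (s ^ m * exp (- pi * s))"

text \<open>Here and below every term with a truncated index \<open>m - 1\<close> or \<open>m - 2\<close> carries the factor
  \<open>m\<close> or \<open>m (m - 1)\<close>, so the truncation is harmless for \<open>m \<le> 1\<close>.\<close>

definition fock_proj_profile' :: "nat \<Rightarrow> real \<Rightarrow> real" where
  "fock_proj_profile' m s = pi ^ m / fact m * (exp (- pi * s) * (m * s ^ (m - 1) - pi * s ^ m))"

definition fock_proj_profile'' :: "nat \<Rightarrow> real \<Rightarrow> real" where
  "fock_proj_profile'' m s = pi ^ m / fact m * (exp (- pi * s)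
     * (real (m * (m - 1)) * s ^ (m - 2) - 2 * pi * m * s ^ (m - 1) + pi\<^sup>2 * s ^ m))"

lemma has_real_derivative_fock_proj_profile:
  "(fock_proj_profile m has_real_derivative fock_proj_profile' m s) (at s)"
proof -
  have "((\<lambda>s. s ^ m * exp (- pi * s)) has_real_derivative exp (- pi * s) * (m * s ^ (m - 1) - pi * s ^ m)) (at s)"
    by (auto intro!: derivative_eq_intros simp: algebra_simps)
  from DERIV_cmult[OF this, of "pi ^ m / fact m"] show ?thesis
    unfolding fock_proj_profile_def[abs_def] fock_proj_profile'_def .
qed

lemma has_real_derivative_fock_proj_profile':
  "(fock_proj_profile' m has_real_derivative fock_proj_profile'' m s) (at s)"
proof -
  have "((\<lambda>s. exp (- pi * s) * (m * s ^ (m - 1) - pi * s ^ m)) has_real_derivative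
      exp (- pi * s) * (real (m * (m - 1)) * s ^ (m - 2) - 2 * pi * m * s ^ (m - 1) + pi\<^sup>2 * s ^ m)) (at s)"
  proof -
    consider "m = 0" | "m = 1" | k where "m = Suc (Suc k)"
      by (metis One_nat_def not0_implies_Suc)
    then show ?thesis
      by cases (auto intro!: derivative_eq_intros simp: power2_eq_square algebra_simps simp del: power_Suc)
  qed
  from DERIV_cmult[OF this, of "pi ^ m / fact m"] show ?thesis
    unfolding fock_proj_profile'_def[abs_def] fock_proj_profile''_def .
qed

lemma fock_proj_profile_radial_laplacian:
  "s * fock_proj_profile'' m s + fock_proj_profile' m s
     = pi * (m * fock_proj_profile (m - 1) s - (2 * m + 1) * fock_proj_profile m s
             + (m + 1) * fock_proj_profile (m + 1) s)"
proof (cases m)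
  case 0
  then show ?thesis
    by (simp add: fock_proj_profile_def fock_proj_profile'_def fock_proj_profile''_def power2_eq_square algebra_simps)
next
  case (Suc n)
  define a e where "a = pi ^ m / fact m" and "e = exp (- pi * s)"
  have ratio: "real (Suc j) * (pi ^ Suc j / fact (Suc j)) = pi * (pi ^ j / fact j)" for j
    by (simp add: field_simps del: of_nat_Suc)
  have "pi * fock_proj_profile (m - 1) s = (pi * (pi ^ n / fact n)) * (s ^ n * e)"
    by (simp add: fock_proj_profile_def Suc e_def)
  also have "\<dots> = m * a * s ^ n * e"
    unfolding ratio[of n, symmetric] a_def Suc by simp
  finally have down: "pi * fock_proj_profile (m - 1) s = m * a * s ^ n * e" .
  have "(m + 1) * fock_proj_profile (m + 1) s = (real (Suc m) * (pi ^ Suc m / fact (Suc m))) * (s ^ Suc m * e)"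
    by (simp add: fock_proj_profile_def e_def)
  also have "\<dots> = pi * a * s ^ Suc m * e"
    unfolding ratio a_def by simp
  finally have up: "(m + 1) * fock_proj_profile (m + 1) s = pi * a * s ^ Suc m * e" .
  have here: "fock_proj_profile m s = a * (s ^ m * e)"
    by (simp add: fock_proj_profile_def a_def e_def)
  have "s * fock_proj_profile'' m s + fock_proj_profile' m s
      = a * e * (real m * real m * s ^ n - pi * (2 * m + 1) * s ^ m + pi\<^sup>2 * s ^ Suc m)"
    unfolding fock_proj_profile'_def fock_proj_profile''_def a_def[symmetric] e_def[symmetric]
    by (cases n) (simp_all add: Suc power2_eq_square algebra_simps)
  also have "\<dots> = m * (pi * fock_proj_profile (m - 1) s) - pi * (2 * m + 1) * fock_proj_profile m s
      + pi * ((m + 1) * fock_proj_profile (m + 1) s)"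
    unfolding down up here by (simp add: power2_eq_square algebra_simps)
  finally show ?thesis
    by (simp add: algebra_simps)
qed

definition fock_proj_laplacian :: "nat \<Rightarrow> (complex \<Rightarrow> complex) \<Rightarrow> complex \<Rightarrow> complex" where
  "fock_proj_laplacian m h = (\<lambda>w. complex_of_real pi *
     (of_nat m * fock_proj (m - 1) h w - of_nat (2 * m + 1) * fock_proj m h w
      + of_nat (m + 1) * fock_proj (m + 1) h w))"

lemma fock_proj_finite_rank: "fock_proj m h w = (\<Sum>k<1::nat. fock_inner h (fock_basis m) * fock_basis m w)"
  by (simp add: fock_proj_def)

lemma fock_proj_laplacian_finite_rank:
  "fock_proj_laplacian m h w = (\<Sum>k<3. fock_inner h (fock_basis (m + k - 1))
     * (pi * [of_nat m, - of_nat (2 * m + 1), of_nat (m + 1)] ! k * fock_basis (m + k - 1) w))"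
  by (simp add: fock_proj_laplacian_def fock_proj_def eval_nat_numeral algebra_simps)

lemma fock_weight_mult_fock_basis:
  "fock_weight z * (fock_basis j z * cnj (fock_basis j z)) = fock_proj_profile j ((cmod z)\<^sup>2)"
proof -
  have sq: "complex_of_real (sqrt (pi ^ j / fact j)) * complex_of_real (sqrt (pi ^ j / fact j))
      = complex_of_real (pi ^ j / fact j)"
    by (simp flip: of_real_mult)
  have "fock_basis j z * cnj (fock_basis j z)
      = complex_of_real (sqrt (pi ^ j / fact j)) * complex_of_real (sqrt (pi ^ j / fact j)) * (z * cnj z) ^ j"
    by (simp add: fock_basis_def power_mult_distrib mult_ac)
  also have "\<dots> = complex_of_real (pi ^ j / fact j * ((cmod z)\<^sup>2) ^ j)"
    unfolding sq by (simp add: complex_of_real_cmod_power2)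
  finally show ?thesis
    by (simp add: fock_proj_profile_def mult_ac)
qed

lemma berezin_fock_proj: "berezin (fock_proj m) z = fock_proj_profile m ((cmod z)\<^sup>2)"
proof -
  have "k < 1 \<Longrightarrow> fock_basis m \<in> fock_space \<and> fock_basis m \<in> fock_space" for k :: nat
    by (simp add: fock_basis_in_fock_space)
  from berezin_finite_rank[OF this fock_proj_finite_rank]
  have "berezin (fock_proj m) z = fock_weight z * (fock_basis m z * cnj (fock_basis m z))"
    by simp
  then show ?thesis
    by (simp only: fock_weight_mult_fock_basis)
qed

lemma berezin_fock_proj_laplacian:
  "berezin (fock_proj_laplacian m) z = pi * (m * fock_proj_profile (m - 1) ((cmod z)\<^sup>2)
     - (2 * m + 1) * fock_proj_profile m ((cmod z)\<^sup>2) + (m + 1) * fock_proj_profile (m + 1) ((cmod z)\<^sup>2))"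
proof -
  let ?c = "\<lambda>k. pi * [of_nat m, - of_nat (2 * m + 1), of_nat (m + 1)] ! k"
  have "k < 3 \<Longrightarrow> (\<lambda>w. ?c k * fock_basis (m + k - 1) w) \<in> fock_space \<and> fock_basis (m + k - 1) \<in> fock_space"
    for k :: nat
    by (simp add: fock_space_scale fock_basis_in_fock_space)
  from berezin_finite_rank[OF this fock_proj_laplacian_finite_rank]
  have "berezin (fock_proj_laplacian m) z
      = (\<Sum>k<3. ?c k * (fock_weight z * (fock_basis (m + k - 1) z * cnj (fock_basis (m + k - 1) z))))"
    by (simp add: sum_distrib_left mult_ac)
  also have "\<dots> = (\<Sum>k<3. complex_of_real (?c k) * fock_proj_profile (m + k - 1) ((cmod z)\<^sup>2))"
    by (simp only: fock_weight_mult_fock_basis)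
  finally show ?thesis
    by (simp add: eval_nat_numeral algebra_simps)
qed

lemma fock_trace_class_proj: "fock_trace_class (fock_proj m)"
  by (rule fock_trace_class_finite_rank[OF _ fock_proj_finite_rank]) (simp add: fock_basis_in_fock_space)

lemma fock_trace_class_proj_laplacian: "fock_trace_class (fock_proj_laplacian m)"
  by (rule fock_trace_class_finite_rank[OF _ fock_proj_laplacian_finite_rank])
    (simp add: fock_space_scale fock_basis_in_fock_space)

lemma has_laplacian_berezin_fock_proj:
  "has_laplacian (berezin (fock_proj m)) (berezin (fock_proj_laplacian m))"
proof -
  have "berezin (fock_proj m) = (\<lambda>z. fock_proj_profile m ((cmod z)\<^sup>2))"
    and "berezin (fock_proj_laplacian m) = (\<lambda>z. (cmod z)\<^sup>2 * fock_proj_profile'' m ((cmod z)\<^sup>2)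
        + fock_proj_profile' m ((cmod z)\<^sup>2))"
    by (simp_all add: fun_eq_iff berezin_fock_proj berezin_fock_proj_laplacian
        fock_proj_profile_radial_laplacian del: of_real_add of_real_mult of_real_diff)
  then show ?thesis
    using has_laplacian_radial[OF has_real_derivative_fock_proj_profile has_real_derivative_fock_proj_profile']
    by simp
qed

theorem lemma5p3:
  fixes m :: nat
  shows "W21 (fock_proj m) \<and>
    (\<forall>T. fock_trace_class T \<and> has_laplacian (berezin (fock_proj m)) (berezin T) \<longrightarrow>
       (\<forall>h\<in>fock_space. T h = (\<lambda>w. complex_of_real pi *
          (of_nat m * fock_proj (m - 1) h w
           - of_nat (2 * m + 1) * fock_proj m h w
           + of_nat (m + 1) * fock_proj (m + 1) h w))))"
proof (intro conjI allI impI ballI)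
  show "W21 (fock_proj m)"
    unfolding W21_def
    using fock_trace_class_iff fock_trace_class_proj fock_trace_class_proj_laplacian
      has_laplacian_berezin_fock_proj
    by blast
next
  fix T h
  assume T: "fock_trace_class T \<and> has_laplacian (berezin (fock_proj m)) (berezin T)"
    and h: "h \<in> fock_space"
  then have "berezin T = berezin (fock_proj_laplacian m)"
    using has_laplacian_unique has_laplacian_berezin_fock_proj by blast
  with T h have "T h = fock_proj_laplacian m h"
    using berezin_inj_trace_class fock_trace_class_proj_laplacian by blast
  then show "T h = (\<lambda>w. complex_of_real pi * (of_nat m * fock_proj (m - 1) h w
      - of_nat (2 * m + 1) * fock_proj m h w + of_nat (m + 1) * fock_proj (m + 1) h w))"
    unfolding fock_proj_laplacian_def .
qed

end
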